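(* Let $b\ge 3$ be an integer, $n=2^{b-2}$, $W^f\in\mathbb{R}^N$ with components of pairwise distinct absolute values, and $\mu>0$. Define $\tilde Q\in\mathbb{R}^N$ componentwise by $$\tilde Q_i=\begin{cases}0 & \text{if } |W^f_i|<\tfrac{2^{2-n}}{3}\mu,\\ \mathrm{sign}(W^f_i)\,2^{1-n} & \text{if } \tfrac{2^{2-n}}{3}\mu\le |W^f_i|<2^{2-n}\mu,\\ \mathrm{sign}(W^f_i)\,2^{-t} & \text{if } 2^{-t}\mu\le |W^f_i|<2^{-t+1}\mu,\quad t=1,\dots,n-2,\\ \mathrm{sign}(W^f_i) & \text{if } \mu\le |W^f_i|,\end{cases}$$ and assume $\tilde Q\neq 0$. For $t=0,\dots,n-1$ let $\tilde k_t$ be the number of indices $i$ with $|\tilde Q_i|=2^{-t}$. Then $$\tilde s^*=\left\lfloor \log_2\frac{4\sum_{t=0}^{n-1}2^{-t}\|W^f_{[\tilde k_t]}\|_1}{3\sum_{t=0}^{n-1}\tilde k_t\,2^{-2t}}\right\rfloor$$ minimizes $\|2^s\tilde Q-W^f\|_2^2$ over all $s\in\mathbb{Z}$.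
   Context: Notation: sort the indices of $W^f$ by decreasing $|W^f_i|$. Given nonnegative integers $k_0,\dots,k_{n-1}$ with $\sum_t k_t\le N$, the vector $W^f_{[k_0]}\in\mathbb{R}^N$ keeps the $k_0$ components of $W^f$ of largest magnitude and sets all other components to zero; $W^f_{[k_1]}$ keeps the next $k_1$ largest-magnitude components (those ranked $k_0+1,\dots,k_0+k_1$) and zeros out all others; in general $W^f_{[k_t]}$ keeps the components ranked $k_0+\dots+k_{t-1}+1,\dots,k_0+\dots+k_t$ in magnitude and zeros out the rest. $\mathrm{sign}$ is applied componentwise with $\mathrm{sign}(0)=0$. $\lfloor\cdot\rfloor$ is the floor function and $\|\cdot\|_1$ the $\ell^1$ norm. *)

theory Defs
  imports Complex_Main
begin

text \<open>Vectors in R^N are represented as functions nat => real, only the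
  components with index i < N being relevant. n = 2^(b-2).\<close>

definition nlev :: "nat \<Rightarrow> nat" where
  "nlev b = 2 ^ (b - 2)"

definition Qt :: "nat \<Rightarrow> real \<Rightarrow> (nat \<Rightarrow> real) \<Rightarrow> nat \<Rightarrow> real" where
  "Qt b \<mu> W i =
    (let n = nlev b; w = \<bar>W i\<bar> in
     if w < 2 powr (2 - real n) / 3 * \<mu> then 0
     else if w < 2 powr (2 - real n) * \<mu> then sgn (W i) * 2 powr (1 - real n)
     else if \<mu> \<le> w then sgn (W i)
     else if (\<exists>t::nat\<in>{1..n-2}. 2 powr (- real t) * \<mu> \<le> w \<and> w < 2 powr (- real t + 1) * \<mu>)
       then sgn (W i) * 2 powr (- real (THE t::nat. t \<in> {1..n-2} \<and>
                2 powr (- real t) * \<mu> \<le> w \<and> w < 2 powr (- real t + 1) * \<mu>))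
     else 0)"

definition kt :: "nat \<Rightarrow> real \<Rightarrow> (nat \<Rightarrow> real) \<Rightarrow> nat \<Rightarrow> nat \<Rightarrow> nat" where
  "kt b \<mu> W N t = card {i. i < N \<and> \<bar>Qt b \<mu> W i\<bar> = 2 powr (- real t)}"

text \<open>0-based rank of index i when indices are sorted by decreasing |W_i|
  (well defined since the absolute values are pairwise distinct).\<close>
definition rank :: "(nat \<Rightarrow> real) \<Rightarrow> nat \<Rightarrow> nat \<Rightarrow> nat" where
  "rank W N i = card {j. j < N \<and> \<bar>W i\<bar> < \<bar>W j\<bar>}"

text \<open>|| W_[k_t] ||_1 for a sequence k_0, k_1, ...: the l1 norm of the block of
  components ranked k_0+...+k_{t-1}+1, ..., k_0+...+k_t (1-based).\<close>
definition block_l1 :: "(nat \<Rightarrow> real) \<Rightarrow> nat \<Rightarrow> (nat \<Rightarrow> nat) \<Rightarrow> nat \<Rightarrow> real" where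
  "block_l1 W N k t =
     (\<Sum>i\<in>{i. i < N \<and> (\<Sum>u<t. k u) \<le> rank W N i \<and> rank W N i < (\<Sum>u\<le>t. k u)}. \<bar>W i\<bar>)"

definition sstar :: "nat \<Rightarrow> real \<Rightarrow> (nat \<Rightarrow> real) \<Rightarrow> nat \<Rightarrow> int" where
  "sstar b \<mu> W N =
    (let n = nlev b; k = kt b \<mu> W N in
     \<lfloor>log 2 ((4 * (\<Sum>t<n. 2 powr (- real t) * block_l1 W N k t)) /
              (3 * (\<Sum>t<n. real (k t) * 2 powr (- 2 * real t))))\<rfloor>)"

definition sqerr :: "nat \<Rightarrow> real \<Rightarrow> (nat \<Rightarrow> real) \<Rightarrow> nat \<Rightarrow> int \<Rightarrow> real" where
  "sqerr b \<mu> W N s = (\<Sum>i<N. (2 powr (real_of_int s) * Qt b \<mu> W i - W i)\<^sup>2)"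

end

theory Submission imports Defs begin

text \<open>With \<open>A = \<Sum> Q\<^sub>i\<^sup>2\<close> and \<open>B = \<Sum> Q\<^sub>i W\<^sub>i\<close>, the error \<open>\<Vert>2\<^sup>s Q - W\<Vert>\<^sup>2\<close> is the quadratic
  \<open>A x\<^sup>2 - 2 B x + C\<close> in \<open>x = 2\<^sup>s\<close>. Passing from \<open>x\<close> to \<open>2x\<close> changes it by \<open>x (3 A x - 2 B)\<close>,
  so over powers of two it is minimised by the largest \<open>x\<close> with \<open>x \<le> 4B/(3A)\<close>, which is
  \<open>2\<^sup>s\<^sup>*\<close>. Since each nonzero \<open>Q\<^sub>i\<close> is \<open>sgn W\<^sub>i 2\<^sup>-\<^sup>t\<close> and the level \<open>t\<close> increases as \<open>|W\<^sub>i|\<close>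
  decreases, the level sets of \<open>|Q|\<close> are consecutive blocks in the ranking of \<open>|W|\<close>; hence
  \<open>A = \<Sum>\<^sub>t k\<^sub>t 4\<^sup>-\<^sup>t\<close> and \<open>B = \<Sum>\<^sub>t 2\<^sup>-\<^sup>t \<Vert>W\<^sub>[\<^sub>k\<^sub>t\<^sub>]\<Vert>\<^sub>1\<close>.\<close>

lemma floor_log2_minimises_quadratic_on_powers:
  fixes A B :: real and s :: int
  assumes A: "A > 0" and B: "B > 0"
  defines "s0 \<equiv> \<lfloor>log 2 ((4 * B) / (3 * A))\<rfloor>"
  shows "A * (2 powr s0)\<^sup>2 - 2 * B * 2 powr s0 \<le> A * (2 powr s)\<^sup>2 - 2 * B * 2 powr s"
proof -
  define r where "r = (4 * B) / (3 * A)"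
  have r: "r > 0" using A B by (simp add: r_def)
  define x where "x = 2 powr (real_of_int s0)"
  define y where "y = 2 powr (real_of_int s)"
  have "x \<le> 2 powr (log 2 r)" unfolding x_def s0_def r_def[symmetric] by (intro powr_mono) auto
  then have x_le_r: "3 * A * x \<le> 4 * B" using r A by (simp add: r_def field_simps)
  have "2 powr (log 2 r) < 2 powr (real_of_int s0 + 1)" unfolding s0_def r_def[symmetric]
    by (intro powr_less_mono) linarith+
  then have r_less_2x: "2 * B < 3 * A * x" using r A by (simp add: powr_add x_def r_def field_simps)
  have pos: "x > 0" "y > 0" by (simp_all add: x_def y_def)
  consider "s0 < s" | "s = s0" | "s < s0" by linarith
  then have "A * x\<^sup>2 - 2 * B * x \<le> A * y\<^sup>2 - 2 * B * y"
  proof cases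
    case 1
    then have "2 powr (real_of_int s0 + 1) \<le> y" unfolding y_def by (intro powr_mono) auto
    then have yx: "2 * x \<le> y" by (simp add: powr_add x_def)
    have "A * (3 * x) \<le> A * (y + x)" using yx A by (intro mult_left_mono) auto
    then have "(y - x) * (A * (y + x) - 2 * B) \<ge> 0" using yx pos r_less_2x by simp
    then show ?thesis by (simp add: algebra_simps power2_eq_square)
  next
    case 3
    then have "2 powr (real_of_int s + 1) \<le> x" unfolding x_def by (intro powr_mono) auto
    then have yx: "2 * y \<le> x" by (simp add: powr_add y_def)
    have "A * (2 * (x + y)) \<le> A * (3 * x)" using yx A by (intro mult_left_mono) auto
    then have "A * (x + y) \<le> 2 * B" using x_le_r by (simp add: algebra_simps)
    then have "(x - y) * (2 * B - A * (x + y)) \<ge> 0" using yx pos by simp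
    then show ?thesis by (simp add: algebra_simps power2_eq_square)
  qed (simp add: x_def y_def)
  then show ?thesis by (simp add: x_def y_def)
qed

lemma sum_squared_scaled_diff:
  fixes q w :: "'a \<Rightarrow> real"
  shows "(\<Sum>i\<in>I. (x * q i - w i)\<^sup>2)
    = (\<Sum>i\<in>I. (q i)\<^sup>2) * x\<^sup>2 - 2 * (\<Sum>i\<in>I. q i * w i) * x + (\<Sum>i\<in>I. (w i)\<^sup>2)"
  by (simp add: power2_diff sum.distrib sum_subtractf sum_distrib_left sum_distrib_right algebra_simps)

lemma rank_less_if_abs_less:
  assumes "j < N" "\<bar>W i\<bar> < \<bar>W j\<bar>"
  shows "rank W N j < rank W N i"
  unfolding rank_def using assms by (intro psubset_card_mono) auto

lemma inj_on_rank:
  assumes "\<forall>i<N. \<forall>j<N. i \<noteq> j \<longrightarrow> \<bar>W i\<bar> \<noteq> \<bar>W j\<bar>"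
  shows "inj_on (rank W N) {..<N}"
proof (rule inj_onI)
  fix i j assume "i \<in> {..<N}" "j \<in> {..<N}" "rank W N i = rank W N j"
  then show "i = j" using assms rank_less_if_abs_less[of i N W j] rank_less_if_abs_less[of j N W i]
    by (cases "\<bar>W i\<bar> < \<bar>W j\<bar>") force+
qed

lemma level_sets_eq_rank_blocks:
  fixes W :: "nat \<Rightarrow> real" and S :: "nat \<Rightarrow> nat set"
  assumes dist: "\<forall>i<N. \<forall>j<N. i \<noteq> j \<longrightarrow> \<bar>W i\<bar> \<noteq> \<bar>W j\<bar>"
    and sub: "\<And>t. S t \<subseteq> {..<N}"
    and ordered: "\<And>u v i j. i \<in> S u \<Longrightarrow> j \<in> S v \<Longrightarrow> u < v \<Longrightarrow> \<bar>W j\<bar> < \<bar>W i\<bar>"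
    and below: "\<And>t i j. i \<in> S t \<Longrightarrow> j < N \<Longrightarrow> j \<notin> (\<Union>u. S u) \<Longrightarrow> \<bar>W j\<bar> < \<bar>W i\<bar>"
  shows "S t = {i. i < N \<and> (\<Sum>u<t. card (S u)) \<le> rank W N i \<and> rank W N i < (\<Sum>u\<le>t. card (S u))}"
    (is "_ = ?block")
proof -
  have fin: "finite (S u)" for u using sub finite_subset by blast
  have disj: "S u \<inter> S v = {}" if "u \<noteq> v" for u v
    using that ordered[of _ u _ v] ordered[of _ v _ u] by (cases "u < v") fastforce+
  have card_UN: "card (\<Union>u\<in>I. S u) = (\<Sum>u\<in>I. card (S u))" if "finite I" for I :: "nat set"
    using that by (intro card_UN_disjoint) (auto simp: fin disj)
  define above where "above i = {j. j < N \<and> \<bar>W i\<bar> < \<bar>W j\<bar>}" for i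
  have above_lower: "(\<Union>u<t. S u) \<subseteq> above i" if "i \<in> S t" for i
    using that sub ordered unfolding above_def by blast
  have above_upper: "above i \<subseteq> (\<Union>u\<le>t. S u) - {i}" if "i \<in> S t" for i
  proof
    fix j assume "j \<in> above i"
    then have j: "j < N" "\<bar>W i\<bar> < \<bar>W j\<bar>" unfolding above_def by auto
    have "j \<in> (\<Union>u. S u)" using below[OF that j(1)] j(2) by fastforce
    then obtain v where "j \<in> S v" by blast
    moreover have "\<not> t < v" using ordered[OF that \<open>j \<in> S v\<close>] j by linarith
    ultimately show "j \<in> (\<Union>u\<le>t. S u) - {i}" using j by auto
  qed
  have "S t \<subseteq> ?block"
  proof
    fix i assume i: "i \<in> S t"
    have rank: "rank W N i = card (above i)" unfolding rank_def above_def ..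
    have "(\<Sum>u<t. card (S u)) \<le> rank W N i"
      unfolding rank card_UN[OF finite_lessThan, symmetric]
      by (intro card_mono above_lower i) (simp add: above_def)
    moreover have "rank W N i \<le> card ((\<Union>u\<le>t. S u) - {i})"
      unfolding rank by (intro card_mono above_upper i) (auto simp: fin)
    moreover have "\<dots> < (\<Sum>u\<le>t. card (S u))"
      unfolding card_UN[OF finite_atMost, symmetric] using i by (intro card_Diff1_less) (auto simp: fin)
    ultimately show "i \<in> ?block" using i sub by auto
  qed
  moreover have "card ?block \<le> card (S t)"
  proof -
    have "card ?block \<le> card {(\<Sum>u<t. card (S u))..<(\<Sum>u\<le>t. card (S u))}"
      by (rule card_inj_on_le[where f = "rank W N"]) (auto intro: inj_on_subset[OF inj_on_rank[OF dist]])
    also have "\<dots> = card (S t)" by (simp add: lessThan_Suc_atMost[symmetric])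
    finally show ?thesis .
  qed
  ultimately show ?thesis by (intro card_seteq) auto
qed

lemma sum_over_level_sets:
  fixes g :: "nat \<Rightarrow> real" and S :: "nat \<Rightarrow> nat set"
  assumes sub: "\<And>t. S t \<subseteq> {..<N}"
    and disj: "\<And>u v. u \<noteq> v \<Longrightarrow> S u \<inter> S v = {}"
    and vanish: "\<And>i. i < N \<Longrightarrow> i \<notin> (\<Union>t<n. S t) \<Longrightarrow> g i = 0"
  shows "(\<Sum>i<N. g i) = (\<Sum>t<n. \<Sum>i\<in>S t. g i)"
proof -
  have fin: "finite (S t)" for t using sub finite_subset by blast
  have "(\<Sum>t<n. \<Sum>i\<in>S t. g i) = (\<Sum>i\<in>(\<Union>t<n. S t). g i)"
    by (rule sum.UNION_disjoint[symmetric]) (auto simp: fin disj)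
  also have "\<dots> = (\<Sum>i<N. g i)"
    using sub vanish by (intro sum.mono_neutral_left) auto
  finally show ?thesis ..
qed

lemma dyadic_bracket_unique:
  fixes a c :: nat and \<mu> w :: real
  assumes "\<mu> > 0"
    and "2 powr (- real a) * \<mu> \<le> w" "w < 2 powr (- real a + 1) * \<mu>"
    and "2 powr (- real c) * \<mu> \<le> w" "w < 2 powr (- real c + 1) * \<mu>"
  shows "a = c"
proof -
  have "\<not> a < c" if "2 powr (- real a) * \<mu> \<le> w" "w < 2 powr (- real c + 1) * \<mu>" for a c :: nat
  proof
    assume "a < c"
    then have "2 powr (- real c + 1) \<le> 2 powr (- real a)" by (intro powr_mono) auto
    then show False using that \<open>\<mu> > 0\<close> by (smt (verit) mult_right_mono)
  qed
  then show ?thesis using assms by (meson linorder_neqE_nat)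
qed

lemma dyadic_bracket_exists:
  fixes m :: nat and \<mu> w :: real
  assumes "2 powr (- real m) * \<mu> \<le> w" "w < \<mu>"
  shows "\<exists>t\<in>{1..m}. 2 powr (- real t) * \<mu> \<le> w \<and> w < 2 powr (- real t + 1) * \<mu>"
proof -
  define P where "P t \<longleftrightarrow> 2 powr (- real t) * \<mu> \<le> w" for t :: nat
  define t where "t = (LEAST t. P t)"
  have "P t" "t \<le> m" using assms(1) LeastI[of P m] Least_le[of P m] unfolding t_def P_def by auto
  moreover have "t \<noteq> 0" using \<open>P t\<close> assms(2) unfolding P_def by (cases "t = 0") auto
  moreover have "\<not> P (t - 1)" using \<open>t \<noteq> 0\<close> not_less_Least[of "t - 1" P] unfolding t_def by simp
  moreover have "- real (t - 1) = - real t + 1" using \<open>t \<noteq> 0\<close> by (simp add: of_nat_diff)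
  ultimately show ?thesis unfolding P_def by (intro bexI[of _ t]) auto
qed

lemma nlev_ge_2: "b \<ge> 3 \<Longrightarrow> nlev b \<ge> 2"
  using power_increasing[of 1 "b - 2" "2::nat"] by (simp add: nlev_def)

lemma Qt_cases:
  assumes b: "b \<ge> 3" and mu: "\<mu> > 0"
  shows "(Qt b \<mu> W i = 0 \<and> \<bar>W i\<bar> < 2 powr (2 - real (nlev b)) / 3 * \<mu>) \<or>
    (\<exists>t<nlev b. Qt b \<mu> W i = sgn (W i) * 2 powr (- real t) \<and>
       2 powr (2 - real (nlev b)) / 3 * \<mu> \<le> \<bar>W i\<bar> \<and>
       (t \<le> nlev b - 2 \<longrightarrow> 2 powr (- real t) * \<mu> \<le> \<bar>W i\<bar>) \<and>
       (1 \<le> t \<longrightarrow> \<bar>W i\<bar> < 2 powr (1 - real t) * \<mu>))"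
proof -
  define n where "n = nlev b"
  define w where "w = \<bar>W i\<bar>"
  have n2: "n \<ge> 2" using nlev_ge_2[OF b] by (simp add: n_def)
  note Q = Qt_def[of b \<mu> W i, unfolded Let_def n_def[symmetric] w_def[symmetric]]
  consider "w < 2 powr (2 - real n) / 3 * \<mu>"
    | "2 powr (2 - real n) / 3 * \<mu> \<le> w" "w < 2 powr (2 - real n) * \<mu>"
    | "\<mu> \<le> w"
    | "2 powr (2 - real n) * \<mu> \<le> w" "w < \<mu>"
    by linarith
  then show ?thesis
  proof cases
    case 1
    then show ?thesis using Q by (simp add: w_def n_def)
  next
    case 2
    have "1 - real n = - real (n - 1)" "2 - real n = 1 - real (n - 1)" using n2 by auto
    then show ?thesis using 2 Q n2 unfolding n_def[symmetric] w_def[symmetric]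
      by (intro disjI2 exI[of _ "n - 1"]) auto
  next
    case 3
    have "2 powr (2 - real n) \<le> 1" using n2 powr_mono[of "2 - real n" 0 "2::real"] by simp
    then have "2 powr (2 - real n) * \<mu> \<le> \<mu>" using mu mult_right_mono[of _ 1 \<mu>] by simp
    moreover have "2 powr (2 - real n) / 3 * \<mu> = 2 powr (2 - real n) * \<mu> / 3" by simp
    ultimately have "2 powr (2 - real n) / 3 * \<mu> \<le> w" "\<not> w < 2 powr (2 - real n) * \<mu>"
      using 3 mu by linarith+
    then show ?thesis using 3 Q n2 unfolding n_def[symmetric] w_def[symmetric]
      by (intro disjI2 exI[of _ 0]) auto
  next
    case 4
    define P where "P = (\<lambda>t::nat. 2 powr (- real t) * \<mu> \<le> w \<and> w < 2 powr (- real t + 1) * \<mu>)"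
    have "2 powr (- real (n - 2)) * \<mu> \<le> w" using 4 n2 by (simp add: of_nat_diff)
    then obtain t where t: "t \<in> {1..n-2}" "P t"
      using dyadic_bracket_exists[OF _ \<open>w < \<mu>\<close>] unfolding P_def by blast
    have "(THE t. t \<in> {1..n-2} \<and> P t) = t"
      using t dyadic_bracket_unique[OF mu] unfolding P_def by blast
    moreover have lower: "2 powr (2 - real n) / 3 * \<mu> \<le> w" using 4 mu by (simp add: w_def)
    ultimately have "Qt b \<mu> W i = sgn (W i) * 2 powr (- real t)"
      using 4 t Q unfolding P_def by auto
    then show ?thesis using lower t n2 unfolding n_def[symmetric] w_def[symmetric] P_def
      by (intro disjI2 exI[of _ t]) (auto simp: add.commute)
  qed
qed

definition Qlevel :: "nat \<Rightarrow> real \<Rightarrow> (nat \<Rightarrow> real) \<Rightarrow> nat \<Rightarrow> nat \<Rightarrow> nat set" where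
  "Qlevel b \<mu> W N t = {i. i < N \<and> \<bar>Qt b \<mu> W i\<bar> = 2 powr (- real t)}"

lemma Qlevel_disjoint: "u \<noteq> v \<Longrightarrow> Qlevel b \<mu> W N u \<inter> Qlevel b \<mu> W N v = {}"
  unfolding Qlevel_def using powr_inj[of 2 "- real u" "- real v"] by auto

context
  fixes b N :: nat and \<mu> :: real and W :: "nat \<Rightarrow> real"
  assumes b: "b \<ge> 3" and mu: "\<mu> > 0"
begin

lemma abs_Qt_eq_level:
  assumes "\<bar>Qt b \<mu> W i\<bar> = 2 powr (- real t)"
  shows "t < nlev b \<and> Qt b \<mu> W i = sgn (W i) * 2 powr (- real t) \<and>
       2 powr (2 - real (nlev b)) / 3 * \<mu> \<le> \<bar>W i\<bar> \<and>
       (t \<le> nlev b - 2 \<longrightarrow> 2 powr (- real t) * \<mu> \<le> \<bar>W i\<bar>) \<and>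
       (1 \<le> t \<longrightarrow> \<bar>W i\<bar> < 2 powr (1 - real t) * \<mu>)"
proof -
  from Qt_cases[OF b mu, of W i] assms obtain t' where t': "t' < nlev b"
    "Qt b \<mu> W i = sgn (W i) * 2 powr (- real t')"
    "2 powr (2 - real (nlev b)) / 3 * \<mu> \<le> \<bar>W i\<bar>"
    "t' \<le> nlev b - 2 \<longrightarrow> 2 powr (- real t') * \<mu> \<le> \<bar>W i\<bar>"
    "1 \<le> t' \<longrightarrow> \<bar>W i\<bar> < 2 powr (1 - real t') * \<mu>"
    by auto
  have "W i \<noteq> 0" using t'(3) mu by (auto simp: mult_le_0_iff)
  then have "\<bar>Qt b \<mu> W i\<bar> = 2 powr (- real t')" using t'(2) by (simp add: abs_mult abs_sgn_eq)
  then have "t = t'" using assms powr_inj[of 2 "- real t" "- real t'"] by simp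
  then show ?thesis using t' by simp
qed

lemma Qt_eq_0_if_no_level:
  assumes "\<And>t. \<bar>Qt b \<mu> W i\<bar> \<noteq> 2 powr (- real t)"
  shows "Qt b \<mu> W i = 0 \<and> \<bar>W i\<bar> < 2 powr (2 - real (nlev b)) / 3 * \<mu>"
proof -
  have False if "Qt b \<mu> W i = sgn (W i) * 2 powr (- real t)"
    "2 powr (2 - real (nlev b)) / 3 * \<mu> \<le> \<bar>W i\<bar>" for t
  proof -
    have "W i \<noteq> 0" using that(2) mu by (auto simp: mult_le_0_iff)
    then have "\<bar>Qt b \<mu> W i\<bar> = 2 powr (- real t)" using that(1) by (simp add: abs_mult abs_sgn_eq)
    then show False using assms by blast
  qed
  then show ?thesis using Qt_cases[OF b mu, of W i] by blast
qed

lemma abs_W_less_if_level_less: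
  assumes "\<bar>Qt b \<mu> W i\<bar> = 2 powr (- real u)" "\<bar>Qt b \<mu> W j\<bar> = 2 powr (- real v)" "u < v"
  shows "\<bar>W j\<bar> < \<bar>W i\<bar>"
proof -
  note i = abs_Qt_eq_level[OF assms(1)] and j = abs_Qt_eq_level[OF assms(2)]
  have "2 powr (1 - real v) \<le> 2 powr (- real u)" using assms(3) by (intro powr_mono) auto
  then have "2 powr (1 - real v) * \<mu> \<le> 2 powr (- real u) * \<mu>" using mu by simp
  moreover have "u \<le> nlev b - 2" using j assms(3) by linarith
  then have "2 powr (- real u) * \<mu> \<le> \<bar>W i\<bar>" using i by blast
  moreover have "\<bar>W j\<bar> < 2 powr (1 - real v) * \<mu>" using j assms(3) by simp
  ultimately show ?thesis by linarith
qed

lemma abs_W_less_if_no_level: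
  assumes "\<bar>Qt b \<mu> W i\<bar> = 2 powr (- real t)" "\<And>u. \<bar>Qt b \<mu> W j\<bar> \<noteq> 2 powr (- real u)"
  shows "\<bar>W j\<bar> < \<bar>W i\<bar>"
  using abs_Qt_eq_level[OF assms(1)] Qt_eq_0_if_no_level[OF assms(2)] by linarith

lemma Qt_mult_W: "Qt b \<mu> W i * W i = \<bar>Qt b \<mu> W i\<bar> * \<bar>W i\<bar>"
proof -
  have sgn_mult_self: "sgn x * x = \<bar>x\<bar>" for x :: real by (cases "x > 0"; cases "x < 0") auto
  consider "Qt b \<mu> W i = 0" | t where "Qt b \<mu> W i = sgn (W i) * 2 powr (- real t)"
    using Qt_cases[OF b mu, of W i] by blast
  then show ?thesis
  proof cases
    case 2
    then have "Qt b \<mu> W i * W i = 2 powr (- real t) * \<bar>W i\<bar>" by (simp add: sgn_mult_self)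
    moreover have "\<bar>Qt b \<mu> W i\<bar> * \<bar>W i\<bar> = 2 powr (- real t) * \<bar>W i\<bar>"
      using 2 by (cases "W i = 0") (auto simp: abs_mult abs_sgn_eq)
    ultimately show ?thesis by argo
  qed simp
qed

lemma sums_Qt_pos:
  assumes "\<exists>i<N. Qt b \<mu> W i \<noteq> 0"
  shows "(\<Sum>i<N. (Qt b \<mu> W i)\<^sup>2) > 0 \<and> (\<Sum>i<N. Qt b \<mu> W i * W i) > 0"
proof
  obtain i0 where i0: "i0 < N" "Qt b \<mu> W i0 \<noteq> 0" using assms by blast
  show "(\<Sum>i<N. (Qt b \<mu> W i)\<^sup>2) > 0" using i0 by (intro sum_pos2[of _ i0]) auto
  have "W i0 \<noteq> 0" using i0(2) Qt_cases[OF b mu, of W i0] mu by auto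
  then have "Qt b \<mu> W i0 * W i0 > 0" using i0(2) by (simp add: Qt_mult_W)
  then show "(\<Sum>i<N. Qt b \<mu> W i * W i) > 0" using i0(1) by (intro sum_pos2[of _ i0]) (auto simp: Qt_mult_W)
qed

lemma sum_over_Qlevels:
  fixes g :: "nat \<Rightarrow> real"
  assumes "\<And>i. Qt b \<mu> W i = 0 \<Longrightarrow> g i = 0"
  shows "(\<Sum>i<N. g i) = (\<Sum>t<nlev b. \<Sum>i\<in>Qlevel b \<mu> W N t. g i)"
proof (rule sum_over_level_sets)
  show "Qlevel b \<mu> W N t \<subseteq> {..<N}" for t unfolding Qlevel_def by auto
  show "g i = 0" if "i < N" "i \<notin> (\<Union>t<nlev b. Qlevel b \<mu> W N t)" for i
  proof -
    have "\<bar>Qt b \<mu> W i\<bar> \<noteq> 2 powr (- real t)" for t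
    proof
      assume level: "\<bar>Qt b \<mu> W i\<bar> = 2 powr (- real t)"
      then have "t < nlev b" using abs_Qt_eq_level by blast
      then show False using that level unfolding Qlevel_def by blast
    qed
    then show ?thesis using assms Qt_eq_0_if_no_level by blast
  qed
qed (rule Qlevel_disjoint)

lemma sum_Qt_squared:
  "(\<Sum>i<N. (Qt b \<mu> W i)\<^sup>2) = (\<Sum>t<nlev b. real (kt b \<mu> W N t) * 2 powr (- 2 * real t))"
proof -
  have level: "(Qt b \<mu> W i)\<^sup>2 = 2 powr (- 2 * real t)" if "i \<in> Qlevel b \<mu> W N t" for i t
  proof -
    have "(Qt b \<mu> W i)\<^sup>2 = (2 powr (- real t))\<^sup>2"
      using that unfolding Qlevel_def by (metis (mono_tags) mem_Collect_eq power2_abs)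
    then show ?thesis by (simp add: powr_power)
  qed
  have "(\<Sum>i<N. (Qt b \<mu> W i)\<^sup>2) = (\<Sum>t<nlev b. \<Sum>i\<in>Qlevel b \<mu> W N t. (Qt b \<mu> W i)\<^sup>2)"
    by (rule sum_over_Qlevels) simp
  also have "\<dots> = (\<Sum>t<nlev b. real (kt b \<mu> W N t) * 2 powr (- 2 * real t))"
    by (simp add: level kt_def Qlevel_def[symmetric])
  finally show ?thesis .
qed

end

context
  fixes b N :: nat and \<mu> :: real and W :: "nat \<Rightarrow> real"
  assumes b: "b \<ge> 3" and mu: "\<mu> > 0"
    and dist: "\<forall>i<N. \<forall>j<N. i \<noteq> j \<longrightarrow> \<bar>W i\<bar> \<noteq> \<bar>W j\<bar>"
begin

lemma Qlevel_eq_rank_block: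
  "Qlevel b \<mu> W N t = {i. i < N \<and> (\<Sum>u<t. kt b \<mu> W N u) \<le> rank W N i \<and> rank W N i < (\<Sum>u\<le>t. kt b \<mu> W N u)}"
  unfolding kt_def Qlevel_def[symmetric]
proof (rule level_sets_eq_rank_blocks[OF dist])
  show "Qlevel b \<mu> W N t \<subseteq> {..<N}" for t unfolding Qlevel_def by auto
  show "\<bar>W j\<bar> < \<bar>W i\<bar>" if "i \<in> Qlevel b \<mu> W N u" "j \<in> Qlevel b \<mu> W N v" "u < v" for u v i j
    using that abs_W_less_if_level_less[OF b mu] unfolding Qlevel_def by blast
  show "\<bar>W j\<bar> < \<bar>W i\<bar>" if "i \<in> Qlevel b \<mu> W N t" "j < N" "j \<notin> (\<Union>u. Qlevel b \<mu> W N u)" for t i j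
  proof (rule abs_W_less_if_no_level[OF b mu])
    show "\<bar>Qt b \<mu> W i\<bar> = 2 powr (- real t)" using that(1) unfolding Qlevel_def by simp
    show "\<bar>Qt b \<mu> W j\<bar> \<noteq> 2 powr (- real u)" for u using that(2,3) unfolding Qlevel_def by blast
  qed
qed

lemma sum_Qt_mult_W:
  "(\<Sum>i<N. Qt b \<mu> W i * W i) = (\<Sum>t<nlev b. 2 powr (- real t) * block_l1 W N (kt b \<mu> W N) t)"
proof -
  have level: "Qt b \<mu> W i * W i = 2 powr (- real t) * \<bar>W i\<bar>" if "i \<in> Qlevel b \<mu> W N t" for i t
    using that Qt_mult_W[OF b mu] unfolding Qlevel_def by simp
  have "(\<Sum>i<N. Qt b \<mu> W i * W i) = (\<Sum>t<nlev b. \<Sum>i\<in>Qlevel b \<mu> W N t. Qt b \<mu> W i * W i)"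
    by (rule sum_over_Qlevels[OF b mu]) simp
  also have "\<dots> = (\<Sum>t<nlev b. 2 powr (- real t) * block_l1 W N (kt b \<mu> W N) t)"
    by (simp add: level block_l1_def Qlevel_eq_rank_block[symmetric] sum_distrib_left)
  finally show ?thesis .
qed

end

theorem theorem2:
  fixes b N :: nat and \<mu> :: real and W :: "nat \<Rightarrow> real"
  assumes "b \<ge> 3"
    and "\<forall>i<N. \<forall>j<N. i \<noteq> j \<longrightarrow> \<bar>W i\<bar> \<noteq> \<bar>W j\<bar>"
    and "\<mu> > 0"
    and "\<exists>i<N. Qt b \<mu> W i \<noteq> 0"
  shows "\<forall>s::int. sqerr b \<mu> W N (sstar b \<mu> W N) \<le> sqerr b \<mu> W N s"
proof
  fix s :: int
  define A where "A = (\<Sum>i<N. (Qt b \<mu> W i)\<^sup>2)"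
  define B where "B = (\<Sum>i<N. Qt b \<mu> W i * W i)"
  have pos: "A > 0" "B > 0" using sums_Qt_pos[OF assms(1,3,4)] by (simp_all add: A_def B_def)
  have "sstar b \<mu> W N = \<lfloor>log 2 ((4 * B) / (3 * A))\<rfloor>"
    unfolding sstar_def Let_def A_def B_def
    by (simp only: sum_Qt_squared[OF assms(1,3)] sum_Qt_mult_W[OF assms(1,3,2)])
  then show "sqerr b \<mu> W N (sstar b \<mu> W N) \<le> sqerr b \<mu> W N s"
    unfolding sqerr_def sum_squared_scaled_diff A_def[symmetric] B_def[symmetric]
    using floor_log2_minimises_quadratic_on_powers[OF pos, of s] by (simp add: mult.commute)
qed

end
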